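(* Let an $m\times n$ net in $I^3$ have all its faces in non-isotropic planes. Then the net is deformable if and only if its top view is deformable.
   Context: $I^3$ is $\mathbb{R}^3$ with coordinates $(x,y,z)$; a plane is isotropic if parallel to the $z$-axis; the top view of a point $(x,y,z)$ is $(x,y)$, and the top view of a net is the planar net of top views of its vertices. An $m\times n$ net: points $F_{ij}$, $0\le i\le m,0\le j\le n$, with $F_{ij},F_{i+1,j},F_{i+1,j+1},F_{i,j+1}$ consecutive vertices of a convex planar quadrilateral (face) for all $0\le i<m,0\le j<n$. Two nets are parallel (Combescure transformations of each other) if corresponding edges are parallel. A net is deformable if it is contained in a continuous family of pairwise non-congruent (in the Euclidean or isotropic sense) parallel nets with the same areas of corresponding faces. Isotropic congruences are maps $\mathbf{x}\mapsto A\mathbf{x}+\mathbf{b}$, $A=\begin{pmatrix}\cos\phi&-\sin\phi&0\\ \sin\phi&\cos\phi&0\\ c_1&c_2&1\end{pmatrix}$. *)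

theory Defs
  imports "HOL-Analysis.Analysis"
begin

text \<open>Points of I^3 are vectors in real^3 with coordinates (x,y,z) = (x$1, x$2, x$3).
  The top view of (x,y,z) is (x,y) in real^2.\<close>

definition top_view :: "real^3 \<Rightarrow> real^2" where
  "top_view p = vector [p$1, p$2]"

definition cross2 :: "real^2 \<Rightarrow> real^2 \<Rightarrow> real" where
  "cross2 u v = u$1 * v$2 - u$2 * v$1"

text \<open>a,b,c,d are consecutive vertices of a (non-degenerate) convex planar quadrilateral:
  all four turns have the same orientation, i.e. the cross products of consecutive
  edge vectors are nonzero positive multiples of one common normal vector N
  (this forces planarity and strict convexity).\<close>

definition convex_quad3 :: "real^3 \<Rightarrow> real^3 \<Rightarrow> real^3 \<Rightarrow> real^3 \<Rightarrow> bool" where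
  "convex_quad3 a b c d \<longleftrightarrow> (\<exists>N. N \<noteq> 0 \<and>
      (\<exists>k>0. cross3 (b - a) (c - b) = k *\<^sub>R N) \<and>
      (\<exists>k>0. cross3 (c - b) (d - c) = k *\<^sub>R N) \<and>
      (\<exists>k>0. cross3 (d - c) (a - d) = k *\<^sub>R N) \<and>
      (\<exists>k>0. cross3 (a - d) (b - a) = k *\<^sub>R N))"

definition convex_quad2 :: "real^2 \<Rightarrow> real^2 \<Rightarrow> real^2 \<Rightarrow> real^2 \<Rightarrow> bool" where
  "convex_quad2 a b c d \<longleftrightarrow>
     (\<exists>s::real. (s = 1 \<or> s = -1) \<and>
        s * cross2 (b - a) (c - b) > 0 \<and> s * cross2 (c - b) (d - c) > 0 \<and>
        s * cross2 (d - c) (a - d) > 0 \<and> s * cross2 (a - d) (b - a) > 0)"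

text \<open>Euclidean area of a convex planar quadrilateral (shoelace / diagonal formula).\<close>

definition quad_area2 :: "real^2 \<Rightarrow> real^2 \<Rightarrow> real^2 \<Rightarrow> real^2 \<Rightarrow> real" where
  "quad_area2 a b c d = \<bar>cross2 (c - a) (d - b)\<bar> / 2"

definition iso_quad_area :: "real^3 \<Rightarrow> real^3 \<Rightarrow> real^3 \<Rightarrow> real^3 \<Rightarrow> real" where
  "iso_quad_area a b c d = quad_area2 (top_view a) (top_view b) (top_view c) (top_view d)"

text \<open>A plane u.x = c is isotropic iff it is parallel to the z-axis, i.e. u$3 = 0.
  A quadrilateral lies in a non-isotropic plane iff no isotropic plane contains it.\<close>

definition in_nonisotropic_plane :: "real^3 \<Rightarrow> real^3 \<Rightarrow> real^3 \<Rightarrow> real^3 \<Rightarrow> bool" where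
  "in_nonisotropic_plane a b c d \<longleftrightarrow>
     \<not> (\<exists>u c0. u \<noteq> 0 \<and> u$3 = 0 \<and> u \<bullet> a = c0 \<and> u \<bullet> b = c0 \<and> u \<bullet> c = c0 \<and> u \<bullet> d = c0)"

text \<open>An m x n net is given by F i j for 0 \<le> i \<le> m, 0 \<le> j \<le> n (values outside are irrelevant).\<close>

definition is_net3 :: "nat \<Rightarrow> nat \<Rightarrow> (nat \<Rightarrow> nat \<Rightarrow> real^3) \<Rightarrow> bool" where
  "is_net3 m n F \<longleftrightarrow> (\<forall>i<m. \<forall>j<n.
      convex_quad3 (F i j) (F (Suc i) j) (F (Suc i) (Suc j)) (F i (Suc j)))"

definition is_net2 :: "nat \<Rightarrow> nat \<Rightarrow> (nat \<Rightarrow> nat \<Rightarrow> real^2) \<Rightarrow> bool" where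
  "is_net2 m n F \<longleftrightarrow> (\<forall>i<m. \<forall>j<n.
      convex_quad2 (F i j) (F (Suc i) j) (F (Suc i) (Suc j)) (F i (Suc j)))"

definition top_view_net :: "(nat \<Rightarrow> nat \<Rightarrow> real^3) \<Rightarrow> (nat \<Rightarrow> nat \<Rightarrow> real^2)" where
  "top_view_net F = (\<lambda>i j. top_view (F i j))"

definition nets_parallel :: "nat \<Rightarrow> nat \<Rightarrow> (nat \<Rightarrow> nat \<Rightarrow> 'a::real_vector) \<Rightarrow> (nat \<Rightarrow> nat \<Rightarrow> 'a) \<Rightarrow> bool" where
  "nets_parallel m n F G \<longleftrightarrow>
     (\<forall>i<m. \<forall>j\<le>n. \<exists>l::real. G (Suc i) j - G i j = l *\<^sub>R (F (Suc i) j - F i j)) \<and>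
     (\<forall>i\<le>m. \<forall>j<n. \<exists>l::real. G i (Suc j) - G i j = l *\<^sub>R (F i (Suc j) - F i j))"

definition iso_matrix :: "real \<Rightarrow> real \<Rightarrow> real \<Rightarrow> real^3^3" where
  "iso_matrix \<phi> c1 c2 = vector [vector [cos \<phi>, - sin \<phi>, 0],
                                 vector [sin \<phi>, cos \<phi>, 0],
                                 vector [c1, c2, 1]]"

definition iso_congruent :: "nat \<Rightarrow> nat \<Rightarrow> (nat \<Rightarrow> nat \<Rightarrow> real^3) \<Rightarrow> (nat \<Rightarrow> nat \<Rightarrow> real^3) \<Rightarrow> bool" where
  "iso_congruent m n F G \<longleftrightarrow> (\<exists>\<phi> c1 c2 (b::real^3).
     \<forall>i\<le>m. \<forall>j\<le>n. G i j = iso_matrix \<phi> c1 c2 *v F i j + b)"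

definition eucl_congruent :: "nat \<Rightarrow> nat \<Rightarrow> (nat \<Rightarrow> nat \<Rightarrow> real^2) \<Rightarrow> (nat \<Rightarrow> nat \<Rightarrow> real^2) \<Rightarrow> bool" where
  "eucl_congruent m n F G \<longleftrightarrow> (\<exists>(A::real^2^2) (b::real^2). orthogonal_matrix A \<and>
     (\<forall>i\<le>m. \<forall>j\<le>n. G i j = A *v F i j + b))"

definition deformable_gen ::
  "(nat \<Rightarrow> nat \<Rightarrow> (nat \<Rightarrow> nat \<Rightarrow> 'a::real_normed_vector) \<Rightarrow> bool) \<Rightarrow>
   ('a \<Rightarrow> 'a \<Rightarrow> 'a \<Rightarrow> 'a \<Rightarrow> real) \<Rightarrow>
   (nat \<Rightarrow> nat \<Rightarrow> (nat \<Rightarrow> nat \<Rightarrow> 'a) \<Rightarrow> (nat \<Rightarrow> nat \<Rightarrow> 'a) \<Rightarrow> bool) \<Rightarrow>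
   nat \<Rightarrow> nat \<Rightarrow> (nat \<Rightarrow> nat \<Rightarrow> 'a) \<Rightarrow> bool" where
  "deformable_gen isnet area congr m n F \<longleftrightarrow>
     (\<exists>(a::real) b t0 (P :: real \<Rightarrow> nat \<Rightarrow> nat \<Rightarrow> 'a).
        a < b \<and> t0 \<in> {a..b} \<and>
        (\<forall>i\<le>m. \<forall>j\<le>n. P t0 i j = F i j) \<and>
        (\<forall>i\<le>m. \<forall>j\<le>n. continuous_on {a..b} (\<lambda>t. P t i j)) \<and>
        (\<forall>t\<in>{a..b}. isnet m n (P t) \<and> nets_parallel m n F (P t) \<and>
           (\<forall>i<m. \<forall>j<n. area (P t i j) (P t (Suc i) j) (P t (Suc i) (Suc j)) (P t i (Suc j))
                        = area (F i j) (F (Suc i) j) (F (Suc i) (Suc j)) (F i (Suc j)))) \<and>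
        (\<forall>s\<in>{a..b}. \<forall>t\<in>{a..b}. s \<noteq> t \<longrightarrow> \<not> congr m n (P s) (P t)))"

definition deformable_iso :: "nat \<Rightarrow> nat \<Rightarrow> (nat \<Rightarrow> nat \<Rightarrow> real^3) \<Rightarrow> bool" where
  "deformable_iso = deformable_gen is_net3 iso_quad_area iso_congruent"

definition deformable_planar :: "nat \<Rightarrow> nat \<Rightarrow> (nat \<Rightarrow> nat \<Rightarrow> real^2) \<Rightarrow> bool" where
  "deformable_planar = deformable_gen is_net2 quad_area2 eucl_congruent"

end

theory Submission
  imports Defs
begin

text \<open>Every net parallel to F has its faces in planes parallel to the faces of F, which are
  non-isotropic. On such a plane the top view is injective and turns the cross product into the
  planar signed area times a fixed normal, so a net parallel to F is a net of convex quadrilaterals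
  iff its top view is; isotropic face areas are the areas of the top views by definition.

  Hence the top view of a deformation of F is a deformation of the top view. Non-congruence
  survives because along a continuous family every edge stays a positive multiple of the edge of F:
  a Euclidean congruence of two top views preserves the lengths of the projected edges, which forces
  equal edges in I^3, so the two nets differ by a translation.

  Conversely, a deformation of the top view lifts: every edge of a planar net parallel to the top
  view determines the unique parallel edge of F with that top view, these lifted edges close up
  around each face, and summing them along paths gives a continuous family of nets in I^3.\<close>

lemma top_view_component [simp]: "top_view p $ 1 = p $ 1" "top_view p $ 2 = p $ 2"
  by (simp_all add: top_view_def)

lemma top_view_add [simp]: "top_view (x + y) = top_view x + top_view y"
  and top_view_diff [simp]: "top_view (x - y) = top_view x - top_view y"
  and top_view_scaleR [simp]: "top_view (c *\<^sub>R x) = c *\<^sub>R top_view x"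
  by (simp_all add: vec_eq_iff forall_2)

lemma bounded_linear_top_view: "bounded_linear top_view"
  by (simp add: linear_iff flip: linear_conv_bounded_linear)

lemma continuous_on_top_view [continuous_intros]:
  "continuous_on S f \<Longrightarrow> continuous_on S (\<lambda>t. top_view (f t))"
  by (rule bounded_linear.continuous_on[OF bounded_linear_top_view])

definition lift :: "real^2 \<Rightarrow> real \<Rightarrow> real^3" where
  "lift q z = vector [q$1, q$2, z]"

lemma top_view_lift [simp]: "top_view (lift q z) = q"
  by (simp add: lift_def vec_eq_iff forall_2)

lemma lift_top_view [simp]: "lift (top_view p) (p$3) = p"
  by (simp add: lift_def vec_eq_iff forall_3)

lemma continuous_on_lift [continuous_intros]:
  assumes "continuous_on S f" "continuous_on S g"
  shows "continuous_on S (\<lambda>t. lift (f t) (g t))"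
proof -
  have "lift q z = q$1 *\<^sub>R axis 1 1 + q$2 *\<^sub>R axis 2 1 + z *\<^sub>R axis 3 1" for q z
    by (simp add: lift_def vec_eq_iff forall_3 axis_def)
  then show ?thesis
    by (simp only:) (intro continuous_intros assms)
qed

lemma cross3_component_3: "cross3 u v $ 3 = cross2 (top_view u) (top_view v)"
  by (simp add: cross3_def cross2_def)

lemma cross3_in_plane:
  assumes "u \<bullet> N = 0" "v \<bullet> N = 0" "N$3 \<noteq> 0"
  shows "cross3 u v = (cross2 (top_view u) (top_view v) / N$3) *\<^sub>R N"
proof -
  have u3: "u$3 = - (N$1 * u$1 + N$2 * u$2) / N$3"
    and v3: "v$3 = - (N$1 * v$1 + N$2 * v$2) / N$3"
    using assms by (simp_all add: inner_vec_def sum_3 field_simps)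
  show ?thesis
    using assms(3) by (simp add: vec_eq_iff forall_3 cross3_def cross2_def u3 v3 field_simps)
qed

lemma top_view_eq_0_in_plane:
  assumes "x \<bullet> N = 0" "N$3 \<noteq> 0" "top_view x = 0"
  shows "x = 0"
proof -
  have "x$1 = 0" "x$2 = 0"
    using arg_cong[OF assms(3), of "\<lambda>q. q$1"] arg_cong[OF assms(3), of "\<lambda>q. q$2"] by simp_all
  moreover from this assms(1,2) have "x$3 = 0"
    by (simp add: inner_vec_def sum_3)
  ultimately show ?thesis
    by (simp add: vec_eq_iff forall_3)
qed

section \<open>Convex quadrilaterals in non-isotropic planes\<close>

lemma convex_quad3_edges_nonzero:
  assumes "convex_quad3 a b c d"
  shows "b \<noteq> a" "c \<noteq> b" "d \<noteq> c" "a \<noteq> d"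
proof -
  obtain N k1 k2 k3 k4 where "N \<noteq> 0" "k1 > 0" "cross3 (b - a) (c - b) = k1 *\<^sub>R N"
    "k2 > 0" "cross3 (c - b) (d - c) = k2 *\<^sub>R N" "k3 > 0" "cross3 (d - c) (a - d) = k3 *\<^sub>R N"
    "k4 > 0" "cross3 (a - d) (b - a) = k4 *\<^sub>R N"
    using assms unfolding convex_quad3_def by blast
  then show "b \<noteq> a" "c \<noteq> b" "d \<noteq> c" "a \<noteq> d"
    by (auto simp: eq_commute[of 0])
qed

lemma convex_quad3_normal:
  assumes "convex_quad3 a b c d" "in_nonisotropic_plane a b c d"
  obtains N where "N$3 \<noteq> 0" "(b - a) \<bullet> N = 0" "(c - b) \<bullet> N = 0" "(c - d) \<bullet> N = 0" "(d - a) \<bullet> N = 0"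
proof -
  obtain N k1 k2 k3 where N: "N \<noteq> 0" "k1 > 0" "cross3 (b - a) (c - b) = k1 *\<^sub>R N"
    "k2 > 0" "cross3 (c - b) (d - c) = k2 *\<^sub>R N" "k3 > 0" "cross3 (d - c) (a - d) = k3 *\<^sub>R N"
    using assms(1) unfolding convex_quad3_def by blast
  have "(b - a) \<bullet> N = 0" "(c - b) \<bullet> N = 0" "(d - c) \<bullet> N = 0" "(a - d) \<bullet> N = 0"
    using dot_cross_self(1)[of "b - a" "c - b"] dot_cross_self(2)[of "c - b" "b - a"]
      dot_cross_self(2)[of "d - c" "c - b"] dot_cross_self(2)[of "a - d" "d - c"] N
    by simp_all
  then have edges: "(b - a) \<bullet> N = 0" "(c - b) \<bullet> N = 0" "(c - d) \<bullet> N = 0" "(d - a) \<bullet> N = 0"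
    by (simp_all add: inner_diff_left)
  have "N$3 \<noteq> 0"
  proof
    assume "N$3 = 0"
    moreover have "b \<bullet> N = a \<bullet> N" "c \<bullet> N = a \<bullet> N" "d \<bullet> N = a \<bullet> N"
      using edges by (simp_all add: inner_diff_left)
    ultimately show False
      using assms(2) N(1) unfolding in_nonisotropic_plane_def by (metis inner_commute)
  qed
  from \<open>N$3 \<noteq> 0\<close> edges show thesis by (rule that)
qed

lemma convex_quad3_imp_convex_quad2:
  assumes "convex_quad3 a b c d" "N$3 \<noteq> 0" "(b - a) \<bullet> N = 0" "(c - b) \<bullet> N = 0"
  shows "convex_quad2 (top_view a) (top_view b) (top_view c) (top_view d)"
proof -
  obtain M k1 k2 k3 k4 where M: "M \<noteq> 0" "k1 > 0" "cross3 (b - a) (c - b) = k1 *\<^sub>R M"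
    "k2 > 0" "cross3 (c - b) (d - c) = k2 *\<^sub>R M" "k3 > 0" "cross3 (d - c) (a - d) = k3 *\<^sub>R M"
    "k4 > 0" "cross3 (a - d) (b - a) = k4 *\<^sub>R M"
    using assms(1) unfolding convex_quad3_def by blast
  have top: "cross2 (top_view u) (top_view v) = k * M$3" if "cross3 u v = k *\<^sub>R M" for u v k
    using arg_cong[OF that, of "\<lambda>x. x$3"] by (simp add: cross3_component_3)
  have "M$3 \<noteq> 0"
  proof
    assume "M$3 = 0"
    with top[OF M(3)] have "cross3 (b - a) (c - b) = 0"
      using cross3_in_plane[OF assms(3,4,2)] by simp
    with M(1-3) show False by simp
  qed
  then show ?thesis
    unfolding convex_quad2_def using M(2,4,6,8) top[OF M(3)] top[OF M(5)] top[OF M(7)] top[OF M(9)]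
    by (intro exI[of _ "sgn (M$3)"]) (auto simp: sgn_if zero_less_mult_iff mult_less_0_iff)
qed

lemma convex_quad2_imp_convex_quad3:
  assumes "convex_quad2 (top_view a) (top_view b) (top_view c) (top_view d)" "N$3 \<noteq> 0"
    and "(b - a) \<bullet> N = 0" "(c - b) \<bullet> N = 0" "(c - d) \<bullet> N = 0" "(d - a) \<bullet> N = 0"
  shows "convex_quad3 a b c d"
proof -
  obtain s :: real where s: "s = 1 \<or> s = -1"
    "s * cross2 (top_view b - top_view a) (top_view c - top_view b) > 0"
    "s * cross2 (top_view c - top_view b) (top_view d - top_view c) > 0"
    "s * cross2 (top_view d - top_view c) (top_view a - top_view d) > 0"
    "s * cross2 (top_view a - top_view d) (top_view b - top_view a) > 0"
    using assms(1) unfolding convex_quad2_def by blast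
  let ?M = "(s / N$3) *\<^sub>R N"
  have positive: "\<exists>k>0. cross3 u v = k *\<^sub>R ?M"
    if "u \<bullet> N = 0" "v \<bullet> N = 0" "s * cross2 (top_view u) (top_view v) > 0" for u v
    using cross3_in_plane[OF that(1,2) assms(2)] that(3) s(1)
    by (intro exI[of _ "s * cross2 (top_view u) (top_view v)"]) auto
  have "?M \<noteq> 0"
    using s(1) assms(2) by auto
  moreover have "(d - c) \<bullet> N = 0" "(a - d) \<bullet> N = 0"
    using assms(5,6) by (simp_all add: inner_diff_left)
  ultimately show ?thesis
    unfolding convex_quad3_def using assms(3,4) s(2-5)
    by (intro exI[of _ ?M] conjI positive) simp_all
qed

lemma convex_quad3_iff_convex_quad2:
  assumes "N$3 \<noteq> 0" "(b - a) \<bullet> N = 0" "(c - b) \<bullet> N = 0" "(c - d) \<bullet> N = 0" "(d - a) \<bullet> N = 0"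
  shows "convex_quad3 a b c d \<longleftrightarrow> convex_quad2 (top_view a) (top_view b) (top_view c) (top_view d)"
  using convex_quad3_imp_convex_quad2[OF _ assms(1-3)] convex_quad2_imp_convex_quad3[OF _ assms]
  by blast

section \<open>Grid combinatorics\<close>

text \<open>Grid edges run from (i, j) to (i', j') with the larger index second; face_edge k l lists
  the four edges of the face with lower corner (k, l).\<close>

definition net_edge :: "nat \<Rightarrow> nat \<Rightarrow> nat \<Rightarrow> nat \<Rightarrow> nat \<Rightarrow> nat \<Rightarrow> bool" where
  "net_edge m n i j i' j' \<longleftrightarrow>
     (i < m \<and> j \<le> n \<and> i' = Suc i \<and> j' = j) \<or> (i \<le> m \<and> j < n \<and> i' = i \<and> j' = Suc j)"

definition face_edge :: "nat \<Rightarrow> nat \<Rightarrow> nat \<Rightarrow> nat \<Rightarrow> nat \<Rightarrow> nat \<Rightarrow> bool" where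
  "face_edge k l i j i' j' \<longleftrightarrow> (i, j, i', j') \<in>
     {(k, l, Suc k, l), (Suc k, l, Suc k, Suc l), (k, Suc l, Suc k, Suc l), (k, l, k, Suc l)}"

definition face_normal :: "(nat \<Rightarrow> nat \<Rightarrow> real^3) \<Rightarrow> nat \<Rightarrow> nat \<Rightarrow> real^3 \<Rightarrow> bool" where
  "face_normal G k l N \<longleftrightarrow> (\<forall>i j i' j'. face_edge k l i j i' j' \<longrightarrow> (G i' j' - G i j) \<bullet> N = 0)"

lemma face_normal_iff:
  "face_normal G k l N \<longleftrightarrow>
     (G (Suc k) l - G k l) \<bullet> N = 0 \<and> (G (Suc k) (Suc l) - G (Suc k) l) \<bullet> N = 0 \<and>
     (G (Suc k) (Suc l) - G k (Suc l)) \<bullet> N = 0 \<and> (G k (Suc l) - G k l) \<bullet> N = 0"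
  by (auto simp: face_normal_def face_edge_def)

lemma nets_parallel_iff_edges:
  "nets_parallel m n F G \<longleftrightarrow>
     (\<forall>i j i' j'. net_edge m n i j i' j' \<longrightarrow> (\<exists>l::real. G i' j' - G i j = l *\<^sub>R (F i' j' - F i j)))"
  by (auto simp: nets_parallel_def net_edge_def)

lemma face_edge_imp_net_edge: "k < m \<Longrightarrow> l < n \<Longrightarrow> face_edge k l i j i' j' \<Longrightarrow> net_edge m n i j i' j'"
  by (auto simp: face_edge_def net_edge_def)

lemma net_edge_imp_face_edge:
  assumes "1 \<le> m" "1 \<le> n" "net_edge m n i j i' j'"
  obtains k l where "k < m" "l < n" "face_edge k l i j i' j'"
  using assms(3) unfolding net_edge_def
proof (elim disjE conjE)
  assume edge: "i < m" "j \<le> n" "i' = Suc i" "j' = j"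
  show thesis
  proof (cases "j < n")
    case True
    with edge that[of i j] show thesis by (simp add: face_edge_def)
  next
    case False
    with edge assms(2) have "j = Suc (n - 1)" by simp
    with edge assms(2) that[of i "n - 1"] show thesis by (simp add: face_edge_def)
  qed
next
  assume edge: "i \<le> m" "j < n" "i' = i" "j' = Suc j"
  show thesis
  proof (cases "i < m")
    case True
    with edge that[of i j] show thesis by (simp add: face_edge_def)
  next
    case False
    with edge assms(1) have "i = Suc (m - 1)" by simp
    with edge assms(1) that[of "m - 1" j] show thesis by (simp add: face_edge_def)
  qed
qed

lemma grid_constant:
  assumes "\<forall>i j i' j'. net_edge m n i j i' j' \<longrightarrow> D i' j' = D i j" "i \<le> m" "j \<le> n"
  shows "D i j = D 0 0"
proof -
  have column: "D i 0 = D 0 0" if "i \<le> m" for i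
    using that
  proof (induction i)
    case (Suc i)
    then have "net_edge m n i 0 (Suc i) 0" by (simp add: net_edge_def)
    with assms(1) have "D (Suc i) 0 = D i 0" by blast
    with Suc show ?case by simp
  qed simp
  have row: "D i j = D i 0" if "i \<le> m" "j \<le> n" for i j
    using that(2)
  proof (induction j)
    case (Suc j)
    then have "net_edge m n i j i (Suc j)" using that(1) by (simp add: net_edge_def)
    with assms(1) have "D i (Suc j) = D i j" by blast
    with Suc show ?case by simp
  qed simp
  show ?thesis
    using row[OF assms(2,3)] column[OF assms(2)] by simp
qed

lemma is_net3_edge_nonzero:
  assumes "is_net3 m n G" "1 \<le> m" "1 \<le> n" "net_edge m n i j i' j'"
  shows "G i' j' \<noteq> G i j"
proof -
  obtain k l where kl: "k < m" "l < n" "face_edge k l i j i' j'"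
    using net_edge_imp_face_edge[OF assms(2-4)] .
  then have "convex_quad3 (G k l) (G (Suc k) l) (G (Suc k) (Suc l)) (G k (Suc l))"
    using assms(1) unfolding is_net3_def by blast
  from convex_quad3_edges_nonzero[OF this] kl(3) show ?thesis
    unfolding face_edge_def by auto
qed

lemma face_normal_parallel:
  assumes "nets_parallel m n F G" "k < m" "l < n" "face_normal F k l N"
  shows "face_normal G k l N"
  unfolding face_normal_def
proof (intro allI impI)
  fix i j i' j' assume edge: "face_edge k l i j i' j'"
  then obtain c where "G i' j' - G i j = c *\<^sub>R (F i' j' - F i j)"
    using assms(1-3) face_edge_imp_net_edge unfolding nets_parallel_iff_edges by blast
  with assms(4) edge show "(G i' j' - G i j) \<bullet> N = 0"
    unfolding face_normal_def by simp
qed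

definition grid_integral ::
    "'a \<Rightarrow> (nat \<Rightarrow> nat \<Rightarrow> nat \<Rightarrow> nat \<Rightarrow> 'a) \<Rightarrow> nat \<Rightarrow> nat \<Rightarrow> 'a::ab_group_add" where
  "grid_integral p d i j = p + (\<Sum>k<i. d k 0 (Suc k) 0) + (\<Sum>k<j. d i k i (Suc k))"

definition grid_closed :: "nat \<Rightarrow> nat \<Rightarrow> (nat \<Rightarrow> nat \<Rightarrow> nat \<Rightarrow> nat \<Rightarrow> 'a::ab_group_add) \<Rightarrow> bool" where
  "grid_closed m n d \<longleftrightarrow> (\<forall>k<m. \<forall>l<n.
     d k l (Suc k) l + d (Suc k) l (Suc k) (Suc l) = d k l k (Suc l) + d k (Suc l) (Suc k) (Suc l))"

lemma grid_integral_0_0 [simp]: "grid_integral p d 0 0 = p"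
  by (simp add: grid_integral_def)

lemma grid_integral_step_right:
  "grid_integral p d i (Suc j) - grid_integral p d i j = d i j i (Suc j)"
  by (simp add: grid_integral_def)

lemma grid_integral_step_down:
  assumes "grid_closed m n d" "i < m" "j \<le> n"
  shows "grid_integral p d (Suc i) j - grid_integral p d i j = d i j (Suc i) j"
  using assms(3)
proof (induction j)
  case 0
  then show ?case by (simp add: grid_integral_def)
next
  case (Suc j)
  let ?G = "grid_integral p d"
  have "?G (Suc i) (Suc j) - ?G i (Suc j) =
      (?G (Suc i) j - ?G i j) + d (Suc i) j (Suc i) (Suc j) - d i j i (Suc j)"
    using grid_integral_step_right[of p d] by (simp add: algebra_simps)
  also have "\<dots> = d i (Suc j) (Suc i) (Suc j)"
    using Suc assms(1,2) unfolding grid_closed_def by (simp add: algebra_simps)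
  finally show ?case .
qed

lemma grid_integral_net_edge:
  assumes "grid_closed m n d" "net_edge m n i j i' j'"
  shows "grid_integral p d i' j' - grid_integral p d i j = d i j i' j'"
  using assms(2) grid_integral_step_down[OF assms(1)] grid_integral_step_right
  unfolding net_edge_def by auto

lemma deformable_genI:
  fixes a b t0 :: real
  assumes "a < b" "t0 \<in> {a..b}"
    and "\<And>i j. i \<le> m \<Longrightarrow> j \<le> n \<Longrightarrow> P t0 i j = F i j"
    and "\<And>i j. i \<le> m \<Longrightarrow> j \<le> n \<Longrightarrow> continuous_on {a..b} (\<lambda>t. P t i j)"
    and "\<And>t. t \<in> {a..b} \<Longrightarrow> isnet m n (P t)"
    and "\<And>t. t \<in> {a..b} \<Longrightarrow> nets_parallel m n F (P t)"
    and "\<And>t i j. t \<in> {a..b} \<Longrightarrow> i < m \<Longrightarrow> j < n \<Longrightarrow>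
           area (P t i j) (P t (Suc i) j) (P t (Suc i) (Suc j)) (P t i (Suc j))
             = area (F i j) (F (Suc i) j) (F (Suc i) (Suc j)) (F i (Suc j))"
    and "\<And>s t. s \<in> {a..b} \<Longrightarrow> t \<in> {a..b} \<Longrightarrow> congr m n (P s) (P t) \<Longrightarrow> s = t"
  shows "deformable_gen isnet area congr m n F"
  unfolding deformable_gen_def using assms by blast

lemma deformable_genE:
  assumes "deformable_gen isnet area congr m n F"
  obtains a b t0 :: real and P where "a < b" "t0 \<in> {a..b}"
    and "\<And>i j. i \<le> m \<Longrightarrow> j \<le> n \<Longrightarrow> P t0 i j = F i j"
    and "\<And>i j. i \<le> m \<Longrightarrow> j \<le> n \<Longrightarrow> continuous_on {a..b} (\<lambda>t. P t i j)"
    and "\<And>t. t \<in> {a..b} \<Longrightarrow> isnet m n (P t)"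
    and "\<And>t. t \<in> {a..b} \<Longrightarrow> nets_parallel m n F (P t)"
    and "\<And>t i j. t \<in> {a..b} \<Longrightarrow> i < m \<Longrightarrow> j < n \<Longrightarrow>
           area (P t i j) (P t (Suc i) j) (P t (Suc i) (Suc j)) (P t i (Suc j))
             = area (F i j) (F (Suc i) j) (F (Suc i) (Suc j)) (F i (Suc j))"
    and "\<And>s t. s \<in> {a..b} \<Longrightarrow> t \<in> {a..b} \<Longrightarrow> congr m n (P s) (P t) \<Longrightarrow> s = t"
  using assms unfolding deformable_gen_def
  apply (elim exE conjE)
  subgoal for a b t0 P by (rule that[of a b t0 P]) (auto simp del: atLeastAtMost_iff)
  done

lemma continuous_on_Icc_nonzero_pos:
  fixes f :: "real \<Rightarrow> real"
  assumes "continuous_on {a..b} f" "\<forall>t\<in>{a..b}. f t \<noteq> 0" "t0 \<in> {a..b}" "f t0 > 0" "t \<in> {a..b}"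
  shows "f t > 0"
proof (rule ccontr)
  assume "\<not> f t > 0"
  with assms(4) have zero: "0 \<in> closed_segment (f t) (f t0)"
    by (auto simp: closed_segment_eq_real_ivl)
  have segment: "closed_segment t t0 \<subseteq> {a..b}"
    using assms(3,5) by (simp add: closed_segment_subset)
  then obtain x where "x \<in> closed_segment t t0" "f x = 0"
    using IVT'_closed_segment_real[OF zero continuous_on_subset[OF assms(1)]] by blast
  with segment assms(2) show False by blast
qed

lemma continuous_multiple_pos:
  fixes u :: "real \<Rightarrow> 'a::real_inner"
  assumes "continuous_on {a..b} u" "t0 \<in> {a..b}" "u t0 = v"
    and "\<forall>t\<in>{a..b}. u t \<noteq> 0 \<and> (\<exists>c. u t = c *\<^sub>R v)" "t \<in> {a..b}"
  obtains c where "c > 0" "u t = c *\<^sub>R v"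
proof -
  have "u t0 \<noteq> 0" using assms(2,4) by blast
  with assms(3) have "v \<noteq> 0" by simp
  define f where "f t = (v \<bullet> u t) / (v \<bullet> v)" for t
  have u: "u t = f t *\<^sub>R v" if t: "t \<in> {a..b}" for t
  proof -
    obtain c where "u t = c *\<^sub>R v" using bspec[OF assms(4) t] by blast
    with \<open>v \<noteq> 0\<close> show ?thesis unfolding f_def by simp
  qed
  have "continuous_on {a..b} f"
    unfolding f_def by (intro continuous_intros assms(1)) (simp add: \<open>v \<noteq> 0\<close>)
  moreover have "\<forall>t\<in>{a..b}. f t \<noteq> 0"
    using u assms(4) by fastforce
  moreover have "f t0 > 0"
    using assms(3) \<open>v \<noteq> 0\<close> unfolding f_def by simp
  ultimately have "f t > 0"
    using continuous_on_Icc_nonzero_pos assms(2,5) by blast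
  with u[OF assms(5)] that show thesis by blast
qed

lemma norm_orthogonal_matrix_mult:
  "orthogonal_matrix A \<Longrightarrow> norm (A *v x) = norm (x :: real^'n)"
proof -
  assume "orthogonal_matrix A"
  then have "orthogonal_transformation ((*v) A)"
    by (simp add: orthogonal_transformation_matrix)
  then show ?thesis
    by (rule orthogonal_transformation_norm)
qed

lemma parallel_path_eq_if_top_view_norm_eq:
  fixes u :: "real \<Rightarrow> real^3"
  assumes "continuous_on {a..b} u" "t0 \<in> {a..b}" "u t0 = v"
    and "\<forall>t\<in>{a..b}. u t \<noteq> 0 \<and> (\<exists>c. u t = c *\<^sub>R v)" "top_view v \<noteq> 0"
    and "s \<in> {a..b}" "t \<in> {a..b}" "norm (top_view (u s)) = norm (top_view (u t))"
  shows "u s = u t"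
proof -
  obtain cs ct where "cs > 0" "u s = cs *\<^sub>R v" "ct > 0" "u t = ct *\<^sub>R v"
    using continuous_multiple_pos[OF assms(1-4)] assms(6,7) by metis
  with assms(5,8) show ?thesis by simp
qed

definition rot2 :: "real \<Rightarrow> real^2^2" where
  "rot2 \<phi> = vector [vector [cos \<phi>, - sin \<phi>], vector [sin \<phi>, cos \<phi>]]"

lemma orthogonal_matrix_rot2: "orthogonal_matrix (rot2 \<phi>)"
  by (simp add: orthogonal_matrix_def rot2_def vec_eq_iff forall_2 matrix_matrix_mult_def sum_2
      transpose_def mat_def algebra_simps)

lemma top_view_iso_matrix: "top_view (iso_matrix \<phi> c1 c2 *v x) = rot2 \<phi> *v top_view x"
  by (simp add: iso_matrix_def rot2_def vec_eq_iff forall_2 matrix_vector_mult_def sum_2 sum_3)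

lemma iso_congruent_imp_eucl_congruent_top_view:
  assumes "iso_congruent m n G H"
  shows "eucl_congruent m n (top_view_net G) (top_view_net H)"
proof -
  obtain \<phi> c1 c2 b where "\<forall>i\<le>m. \<forall>j\<le>n. H i j = iso_matrix \<phi> c1 c2 *v G i j + b"
    using assms unfolding iso_congruent_def by blast
  then show ?thesis
    unfolding eucl_congruent_def top_view_net_def
    by (intro exI[of _ "rot2 \<phi>"] exI[of _ "top_view b"])
      (simp add: orthogonal_matrix_rot2 top_view_iso_matrix)
qed

lemma iso_congruent_translation:
  assumes "\<And>i j. i \<le> m \<Longrightarrow> j \<le> n \<Longrightarrow> H i j = G i j + c"
  shows "iso_congruent m n G H"
proof -
  have "iso_matrix 0 0 0 *v x = x" for x
    by (simp add: iso_matrix_def vec_eq_iff forall_3 matrix_vector_mult_def sum_3)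
  with assms show ?thesis
    unfolding iso_congruent_def by (intro exI[of _ 0] exI[of _ c]) simp
qed

locale nonisotropic_net =
  fixes m n :: nat and F :: "nat \<Rightarrow> nat \<Rightarrow> real^3"
  assumes m_pos: "1 \<le> m" and n_pos: "1 \<le> n" and net: "is_net3 m n F"
    and nonisotropic: "\<forall>i<m. \<forall>j<n.
      in_nonisotropic_plane (F i j) (F (Suc i) j) (F (Suc i) (Suc j)) (F i (Suc j))"
begin

lemma face_normal_exists:
  assumes "k < m" "l < n"
  obtains N where "N$3 \<noteq> 0" "face_normal F k l N"
proof -
  have "convex_quad3 (F k l) (F (Suc k) l) (F (Suc k) (Suc l)) (F k (Suc l))"
    using net assms unfolding is_net3_def by blast
  moreover have "in_nonisotropic_plane (F k l) (F (Suc k) l) (F (Suc k) (Suc l)) (F k (Suc l))"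
    using nonisotropic assms by blast
  ultimately obtain N where "N$3 \<noteq> 0" "(F (Suc k) l - F k l) \<bullet> N = 0"
    "(F (Suc k) (Suc l) - F (Suc k) l) \<bullet> N = 0" "(F (Suc k) (Suc l) - F k (Suc l)) \<bullet> N = 0"
    "(F k (Suc l) - F k l) \<bullet> N = 0"
    by (rule convex_quad3_normal)
  with that show thesis
    by (simp add: face_normal_iff)
qed

lemma top_view_edge_nonzero:
  assumes "net_edge m n i j i' j'"
  shows "top_view (F i' j' - F i j) \<noteq> 0"
proof
  assume top_view_0: "top_view (F i' j' - F i j) = 0"
  obtain k l where kl: "k < m" "l < n" "face_edge k l i j i' j'"
    using net_edge_imp_face_edge[OF m_pos n_pos assms] .
  obtain N where N: "N$3 \<noteq> 0" "face_normal F k l N"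
    using face_normal_exists kl(1,2) .
  with kl(3) have "(F i' j' - F i j) \<bullet> N = 0"
    unfolding face_normal_def by blast
  from this N(1) top_view_0 have "F i' j' - F i j = 0"
    by (rule top_view_eq_0_in_plane)
  with is_net3_edge_nonzero[OF net m_pos n_pos assms] show False
    by simp
qed

lemma is_net3_iff_is_net2_top_view:
  assumes "nets_parallel m n F G"
  shows "is_net3 m n G \<longleftrightarrow> is_net2 m n (top_view_net G)"
proof -
  have "convex_quad3 (G k l) (G (Suc k) l) (G (Suc k) (Suc l)) (G k (Suc l)) \<longleftrightarrow>
      convex_quad2 (top_view (G k l)) (top_view (G (Suc k) l)) (top_view (G (Suc k) (Suc l)))
        (top_view (G k (Suc l)))" if kl: "k < m" "l < n" for k l
  proof -
    obtain N where N: "N$3 \<noteq> 0" "face_normal F k l N"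
      using face_normal_exists kl .
    then have "face_normal G k l N"
      using face_normal_parallel[OF assms kl] by blast
    then show ?thesis
      unfolding face_normal_iff by (elim conjE) (rule convex_quad3_iff_convex_quad2[OF N(1)])
  qed
  then show ?thesis
    unfolding is_net3_def is_net2_def top_view_net_def by blast
qed

lemma congruent_top_views_imp_iso_congruent:
  fixes a b t0 s t :: real and P :: "real \<Rightarrow> nat \<Rightarrow> nat \<Rightarrow> real^3"
  assumes "t0 \<in> {a..b}" "\<And>i j. i \<le> m \<Longrightarrow> j \<le> n \<Longrightarrow> P t0 i j = F i j"
    and "\<And>i j. i \<le> m \<Longrightarrow> j \<le> n \<Longrightarrow> continuous_on {a..b} (\<lambda>t. P t i j)"
    and "\<And>t. t \<in> {a..b} \<Longrightarrow> is_net3 m n (P t)"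
    and "\<And>t. t \<in> {a..b} \<Longrightarrow> nets_parallel m n F (P t)"
    and "s \<in> {a..b}" "t \<in> {a..b}"
    and "eucl_congruent m n (top_view_net (P s)) (top_view_net (P t))"
  shows "iso_congruent m n (P s) (P t)"
proof -
  obtain A c where A: "orthogonal_matrix A"
    and congr: "\<And>i j. i \<le> m \<Longrightarrow> j \<le> n \<Longrightarrow> top_view (P t i j) = A *v top_view (P s i j) + c"
    using assms(8) unfolding eucl_congruent_def top_view_net_def by blast
  have edge_eq: "P s i' j' - P s i j = P t i' j' - P t i j" if edge: "net_edge m n i j i' j'"
    for i j i' j'
  proof (rule parallel_path_eq_if_top_view_norm_eq[OF _ assms(1) _ _ _ assms(6,7)])
    have grid: "i \<le> m" "j \<le> n" "i' \<le> m" "j' \<le> n"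
      using edge by (auto simp: net_edge_def)
    then show "continuous_on {a..b} (\<lambda>\<sigma>. P \<sigma> i' j' - P \<sigma> i j)"
      by (intro continuous_on_diff assms(3))
    show "P t0 i' j' - P t0 i j = F i' j' - F i j"
      using assms(2) grid by simp
    show "\<forall>\<sigma>\<in>{a..b}. P \<sigma> i' j' - P \<sigma> i j \<noteq> 0 \<and> (\<exists>c. P \<sigma> i' j' - P \<sigma> i j = c *\<^sub>R (F i' j' - F i j))"
      using is_net3_edge_nonzero[OF assms(4) m_pos n_pos edge] assms(5) edge
      unfolding nets_parallel_iff_edges by auto
    show "top_view (F i' j' - F i j) \<noteq> 0"
      using edge by (rule top_view_edge_nonzero)
    have "top_view (P t i' j' - P t i j) = A *v top_view (P s i' j' - P s i j)"
      using grid by (simp add: congr matrix_vector_mult_diff_distrib)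
    then show "norm (top_view (P s i' j' - P s i j)) = norm (top_view (P t i' j' - P t i j))"
      by (simp add: norm_orthogonal_matrix_mult[OF A])
  qed
  have "P t i j - P s i j = P t 0 0 - P s 0 0" if "i \<le> m" "j \<le> n" for i j
  proof (rule grid_constant[OF _ that])
    show "\<forall>i j i' j'. net_edge m n i j i' j' \<longrightarrow> P t i' j' - P s i' j' = P t i j - P s i j"
      using edge_eq by (simp add: algebra_simps)
  qed
  then show ?thesis
    by (intro iso_congruent_translation[of m n "P t" "P s" "P t 0 0 - P s 0 0"])
      (simp add: algebra_simps)
qed

lemma deformable_iso_imp_deformable_planar_top_view:
  assumes "deformable_iso m n F"
  shows "deformable_planar m n (top_view_net F)"
proof -
  obtain a b t0 :: real and P where "a < b" "t0 \<in> {a..b}"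
    and start: "\<And>i j. i \<le> m \<Longrightarrow> j \<le> n \<Longrightarrow> P t0 i j = F i j"
    and cont: "\<And>i j. i \<le> m \<Longrightarrow> j \<le> n \<Longrightarrow> continuous_on {a..b} (\<lambda>t. P t i j)"
    and nets: "\<And>t. t \<in> {a..b} \<Longrightarrow> is_net3 m n (P t)"
    and parallel: "\<And>t. t \<in> {a..b} \<Longrightarrow> nets_parallel m n F (P t)"
    and areas: "\<And>t i j. t \<in> {a..b} \<Longrightarrow> i < m \<Longrightarrow> j < n \<Longrightarrow>
      iso_quad_area (P t i j) (P t (Suc i) j) (P t (Suc i) (Suc j)) (P t i (Suc j))
        = iso_quad_area (F i j) (F (Suc i) j) (F (Suc i) (Suc j)) (F i (Suc j))"
    and noncongruent: "\<And>s t. s \<in> {a..b} \<Longrightarrow> t \<in> {a..b} \<Longrightarrow> iso_congruent m n (P s) (P t) \<Longrightarrow> s = t"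
    using assms unfolding deformable_iso_def by (elim deformable_genE) (rule that)
  show ?thesis
    unfolding deformable_planar_def
  proof (rule deformable_genI[where P = "\<lambda>t. top_view_net (P t)", OF \<open>a < b\<close> \<open>t0 \<in> {a..b}\<close>])
    show "top_view_net (P t0) i j = top_view_net F i j" if "i \<le> m" "j \<le> n" for i j
      using start that by (simp add: top_view_net_def)
    show "continuous_on {a..b} (\<lambda>t. top_view_net (P t) i j)" if "i \<le> m" "j \<le> n" for i j
      unfolding top_view_net_def using cont that by (intro continuous_on_top_view)
    fix t assume t: "t \<in> {a..b}"
    show "is_net2 m n (top_view_net (P t))"
      using nets[OF t] is_net3_iff_is_net2_top_view[OF parallel[OF t]] by simp
    show "nets_parallel m n (top_view_net F) (top_view_net (P t))"
      using parallel[OF t] unfolding nets_parallel_def top_view_net_def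
      by (metis top_view_diff top_view_scaleR)
    show "quad_area2 (top_view_net (P t) i j) (top_view_net (P t) (Suc i) j)
        (top_view_net (P t) (Suc i) (Suc j)) (top_view_net (P t) i (Suc j)) =
      quad_area2 (top_view_net F i j) (top_view_net F (Suc i) j)
        (top_view_net F (Suc i) (Suc j)) (top_view_net F i (Suc j))" if "i < m" "j < n" for i j
      using areas[OF t that] by (simp add: iso_quad_area_def top_view_net_def)
  next
    fix s t assume "s \<in> {a..b}" "t \<in> {a..b}"
      "eucl_congruent m n (top_view_net (P s)) (top_view_net (P t))"
    then show "s = t"
      by (intro noncongruent
          congruent_top_views_imp_iso_congruent[OF \<open>t0 \<in> {a..b}\<close> start cont nets parallel])
  qed
qed

section \<open>Lifting deformations of the top view\<close>

text \<open>For a net G parallel to the top view of F, the multiple of an edge of F whose top view is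
  the corresponding edge of G.\<close>

definition lifted_edge :: "(nat \<Rightarrow> nat \<Rightarrow> real^2) \<Rightarrow> nat \<Rightarrow> nat \<Rightarrow> nat \<Rightarrow> nat \<Rightarrow> real^3" where
  "lifted_edge G i j i' j' = (let e = F i' j' - F i j
     in ((top_view e \<bullet> (G i' j' - G i j)) / (top_view e \<bullet> top_view e)) *\<^sub>R e)"

definition lifted_net :: "(nat \<Rightarrow> nat \<Rightarrow> real^2) \<Rightarrow> nat \<Rightarrow> nat \<Rightarrow> real^3" where
  "lifted_net G = grid_integral (lift (G 0 0) (F 0 0 $ 3)) (lifted_edge G)"

lemma top_view_lifted_edge:
  assumes "nets_parallel m n (top_view_net F) G" "net_edge m n i j i' j'"
  shows "top_view (lifted_edge G i j i' j') = G i' j' - G i j"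
proof -
  define v where "v = top_view (F i' j' - F i j)"
  have "v \<noteq> 0"
    unfolding v_def using assms(2) by (rule top_view_edge_nonzero)
  obtain c where "G i' j' - G i j = c *\<^sub>R v"
    using assms unfolding nets_parallel_iff_edges top_view_net_def v_def by fastforce
  have "top_view (lifted_edge G i j i' j') = ((v \<bullet> (G i' j' - G i j)) / (v \<bullet> v)) *\<^sub>R v"
    unfolding lifted_edge_def Let_def v_def by simp
  also have "\<dots> = G i' j' - G i j"
    using \<open>v \<noteq> 0\<close> \<open>G i' j' - G i j = c *\<^sub>R v\<close> by simp
  finally show ?thesis .
qed

lemma lifted_edge_parallel: "\<exists>c. lifted_edge G i j i' j' = c *\<^sub>R (F i' j' - F i j)"
  unfolding lifted_edge_def Let_def by blast

lemma continuous_on_lifted_edge: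
  assumes "continuous_on S (\<lambda>t. G t i j)" "continuous_on S (\<lambda>t. G t i' j')"
  shows "continuous_on S (\<lambda>t. lifted_edge (G t) i j i' j')"
proof (cases "top_view (F i' j' - F i j) = 0")
  case False
  then show ?thesis
    unfolding lifted_edge_def Let_def by (intro continuous_intros assms) simp
qed (simp add: lifted_edge_def)

text \<open>The closing defect of the lifted edges around a face lies in the plane of that face of F
  and has zero top view.\<close>

lemma grid_closed_lifted_edge:
  assumes "nets_parallel m n (top_view_net F) G"
  shows "grid_closed m n (lifted_edge G)"
  unfolding grid_closed_def
proof (intro allI impI)
  fix k l assume "k < m" "l < n"
  obtain N where N: "N$3 \<noteq> 0" "face_normal F k l N"
    using face_normal_exists \<open>k < m\<close> \<open>l < n\<close> .
  have perp: "lifted_edge G i j i' j' \<bullet> N = 0" if "face_edge k l i j i' j'" for i j i' j'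
    using N(2) that lifted_edge_parallel[of G i j i' j'] unfolding face_normal_def by auto
  have edge: "net_edge m n i j i' j'" if "face_edge k l i j i' j'" for i j i' j'
    using face_edge_imp_net_edge[OF \<open>k < m\<close> \<open>l < n\<close> that] .
  define defect where "defect =
    lifted_edge G k l (Suc k) l + lifted_edge G (Suc k) l (Suc k) (Suc l) -
    lifted_edge G k l k (Suc l) - lifted_edge G k (Suc l) (Suc k) (Suc l)"
  have "defect \<bullet> N = 0"
    unfolding defect_def using perp by (simp add: inner_diff_left inner_add_left face_edge_def)
  moreover have "top_view defect = 0"
    unfolding defect_def using top_view_lifted_edge[OF assms(1) edge] by (simp add: face_edge_def)
  ultimately have "defect = 0"
    using N(1) by (blast intro: top_view_eq_0_in_plane)
  then show "lifted_edge G k l (Suc k) l + lifted_edge G (Suc k) l (Suc k) (Suc l) =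
    lifted_edge G k l k (Suc l) + lifted_edge G k (Suc l) (Suc k) (Suc l)"
    unfolding defect_def by (simp add: algebra_simps)
qed

lemma lifted_net_edge:
  assumes "nets_parallel m n (top_view_net F) G" "net_edge m n i j i' j'"
  shows "lifted_net G i' j' - lifted_net G i j = lifted_edge G i j i' j'"
  unfolding lifted_net_def using grid_closed_lifted_edge[OF assms(1)] assms(2)
  by (rule grid_integral_net_edge)

lemma top_view_lifted_net:
  assumes "nets_parallel m n (top_view_net F) G" "i \<le> m" "j \<le> n"
  shows "top_view (lifted_net G i j) = G i j"
proof -
  have "top_view (lifted_net G i j) - G i j = top_view (lifted_net G 0 0) - G 0 0"
  proof (rule grid_constant[OF _ assms(2,3)], intro allI impI)
    fix i j i' j' assume edge: "net_edge m n i j i' j'"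
    have "top_view (lifted_net G i' j') - top_view (lifted_net G i j) = G i' j' - G i j"
      using lifted_net_edge[OF assms(1) edge] top_view_lifted_edge[OF assms(1) edge]
      by (metis top_view_diff)
    then show "top_view (lifted_net G i' j') - G i' j' = top_view (lifted_net G i j) - G i j"
      by (simp add: algebra_simps)
  qed
  then show ?thesis
    by (simp add: lifted_net_def)
qed

lemma nets_parallel_lifted_net:
  assumes "nets_parallel m n (top_view_net F) G"
  shows "nets_parallel m n F (lifted_net G)"
  unfolding nets_parallel_iff_edges
  using lifted_net_edge[OF assms] lifted_edge_parallel by metis

lemma lifted_net_top_view:
  assumes "\<And>i j. i \<le> m \<Longrightarrow> j \<le> n \<Longrightarrow> G i j = top_view (F i j)" "i \<le> m" "j \<le> n"
  shows "lifted_net G i j = F i j"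
proof -
  have grid: "i \<le> m" "j \<le> n" "i' \<le> m" "j' \<le> n" if "net_edge m n i j i' j'" for i j i' j'
    using that by (auto simp: net_edge_def)
  have edge: "G i' j' - G i j = top_view (F i' j' - F i j)"
    if "net_edge m n i j i' j'" for i j i' j'
    using assms(1) grid[OF that] by simp
  then have parallel: "nets_parallel m n (top_view_net F) G"
    unfolding nets_parallel_iff_edges top_view_net_def by (metis scaleR_one top_view_diff)
  have "lifted_net G i j - F i j = lifted_net G 0 0 - F 0 0"
  proof (rule grid_constant[OF _ assms(2,3)], intro allI impI)
    fix i j i' j' assume e: "net_edge m n i j i' j'"
    have "lifted_net G i' j' - lifted_net G i j = F i' j' - F i j"
      using lifted_net_edge[OF parallel e] top_view_edge_nonzero[OF e]
      by (simp add: lifted_edge_def edge[OF e])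
    then show "lifted_net G i' j' - F i' j' = lifted_net G i j - F i j"
      by (simp add: algebra_simps)
  qed
  then show ?thesis
    using assms(1)[of 0 0] by (simp add: lifted_net_def)
qed

lemma continuous_on_lifted_net:
  assumes "\<And>i j. i \<le> m \<Longrightarrow> j \<le> n \<Longrightarrow> continuous_on S (\<lambda>t. G t i j)" "i \<le> m" "j \<le> n"
  shows "continuous_on S (\<lambda>t. lifted_net (G t) i j)"
  unfolding lifted_net_def grid_integral_def
  using assms by (intro continuous_intros continuous_on_lifted_edge assms) auto

lemma deformable_planar_top_view_imp_deformable_iso:
  assumes "deformable_planar m n (top_view_net F)"
  shows "deformable_iso m n F"
proof -
  obtain a b t0 :: real and Q where "a < b" "t0 \<in> {a..b}"
    and start: "\<And>i j. i \<le> m \<Longrightarrow> j \<le> n \<Longrightarrow> Q t0 i j = top_view_net F i j"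
    and cont: "\<And>i j. i \<le> m \<Longrightarrow> j \<le> n \<Longrightarrow> continuous_on {a..b} (\<lambda>t. Q t i j)"
    and nets: "\<And>t. t \<in> {a..b} \<Longrightarrow> is_net2 m n (Q t)"
    and parallel: "\<And>t. t \<in> {a..b} \<Longrightarrow> nets_parallel m n (top_view_net F) (Q t)"
    and areas: "\<And>t i j. t \<in> {a..b} \<Longrightarrow> i < m \<Longrightarrow> j < n \<Longrightarrow>
      quad_area2 (Q t i j) (Q t (Suc i) j) (Q t (Suc i) (Suc j)) (Q t i (Suc j))
        = quad_area2 (top_view_net F i j) (top_view_net F (Suc i) j)
            (top_view_net F (Suc i) (Suc j)) (top_view_net F i (Suc j))"
    and noncongruent: "\<And>s t. s \<in> {a..b} \<Longrightarrow> t \<in> {a..b} \<Longrightarrow> eucl_congruent m n (Q s) (Q t) \<Longrightarrow> s = t"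
    using assms unfolding deformable_planar_def by (elim deformable_genE) (rule that)
  define P where "P t = lifted_net (Q t)" for t
  have top: "top_view (P t i j) = Q t i j" if "t \<in> {a..b}" "i \<le> m" "j \<le> n" for t i j
    unfolding P_def using top_view_lifted_net[OF parallel] that by blast
  show ?thesis
    unfolding deformable_iso_def
  proof (rule deformable_genI[where P = P, OF \<open>a < b\<close> \<open>t0 \<in> {a..b}\<close>])
    show "P t0 i j = F i j" if "i \<le> m" "j \<le> n" for i j
      unfolding P_def using start that by (intro lifted_net_top_view) (auto simp: top_view_net_def)
    show "continuous_on {a..b} (\<lambda>t. P t i j)" if "i \<le> m" "j \<le> n" for i j
      unfolding P_def using cont that by (rule continuous_on_lifted_net)
    fix t assume t: "t \<in> {a..b}"
    show parallel_P: "nets_parallel m n F (P t)"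
      unfolding P_def using parallel[OF t] by (rule nets_parallel_lifted_net)
    show "is_net3 m n (P t)"
      using nets[OF t] top[OF t] unfolding is_net3_iff_is_net2_top_view[OF parallel_P]
      by (simp add: is_net2_def top_view_net_def)
    show "iso_quad_area (P t i j) (P t (Suc i) j) (P t (Suc i) (Suc j)) (P t i (Suc j)) =
      iso_quad_area (F i j) (F (Suc i) j) (F (Suc i) (Suc j)) (F i (Suc j))" if "i < m" "j < n" for i j
      using areas[OF t that] top[OF t] that by (simp add: iso_quad_area_def top_view_net_def)
  next
    fix s t assume "s \<in> {a..b}" "t \<in> {a..b}" "iso_congruent m n (P s) (P t)"
    then have "eucl_congruent m n (top_view_net (P s)) (top_view_net (P t))"
      by (simp add: iso_congruent_imp_eucl_congruent_top_view)
    with \<open>s \<in> {a..b}\<close> \<open>t \<in> {a..b}\<close> show "s = t"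
      by (intro noncongruent) (simp_all add: eucl_congruent_def top_view_net_def top)
  qed
qed

end

theorem lemma11:
  fixes m n :: nat and F :: "nat \<Rightarrow> nat \<Rightarrow> real^3"
  assumes "1 \<le> m" and "1 \<le> n"
    and "is_net3 m n F"
    and "\<forall>i<m. \<forall>j<n. in_nonisotropic_plane (F i j) (F (Suc i) j) (F (Suc i) (Suc j)) (F i (Suc j))"
  shows "deformable_iso m n F \<longleftrightarrow> deformable_planar m n (top_view_net F)"
proof -
  interpret nonisotropic_net m n F
    using assms by unfold_locales
  show ?thesis
    using deformable_iso_imp_deformable_planar_top_view
      deformable_planar_top_view_imp_deformable_iso by blast
qed

end
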